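(* Let $D(a_0,a_1,a_2;p)=\sum_{k=0}^2\binom{2}{k}p^k(1-p)^{2-k}|p-a_k|$, let $(a_0,a_1,a_2)\in[0,1]^3$ minimize $\max_{p\in[0,1]}D(x_0,x_1,x_2;p)$ over $[0,1]^3$, and let $f(p)=D(a_0,a_1,a_2;p)$. Then $f(0)=f(1)=\|f\|_\infty$, i.e. $\{0,1\}\subset M(f)=\{x\in[0,1]:f(x)=\|f\|_\infty\}$. *)

theory Defs
  imports "HOL-Analysis.Analysis"
begin

definition D :: "real \<Rightarrow> real \<Rightarrow> real \<Rightarrow> real \<Rightarrow> real" where
  "D a0 a1 a2 p = (\<Sum>k\<le>2. real (2 choose k) * p ^ k * (1 - p) ^ (2 - k) *
                     \<bar>p - (if k = 0 then a0 else if k = 1 then a1 else a2)\<bar>)"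

definition supnorm01 :: "(real \<Rightarrow> real) \<Rightarrow> real" where
  "supnorm01 f = (SUP p\<in>{0..1}. \<bar>f p\<bar>)"

definition maxset01 :: "(real \<Rightarrow> real) \<Rightarrow> real set" where
  "maxset01 f = {x \<in> {0..1}. f x = supnorm01 f}"

end

theory Submission
  imports Defs
begin

text \<open>
  Let \<open>M\<close> be the maximum over \<open>[0,1/2]\<close> of \<open>p(1-p)\<^sup>2 / (1-p+p\<^sup>2)\<close>, attained at \<open>q\<close>.
  The symmetric competitor \<open>(M, 1/2, 1-M)\<close> satisfies \<open>D \<le> M\<close> on \<open>[0,1]\<close>, so the
  minimiser has \<open>\<parallel>f\<parallel>\<^sub>\<infinity> \<le> M\<close>. Conversely, for every \<open>x\<close> the weighted sum
  \<open>w D(0) + D(q) + D(1-q) + w D(1)\<close> with \<open>w = (1-q)\<^sup>2 + q\<^sup>2\<close> is at least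
  \<open>4q(1-q)\<^sup>2 = (2w+2) M\<close>. Applied to \<open>f \<le> M\<close> this forces \<open>f(0) = f(1) = M\<close>.
\<close>

lemma D_expand:
  "D x0 x1 x2 p = (1-p)^2 * \<bar>p-x0\<bar> + 2*p*(1-p) * \<bar>p-x1\<bar> + p^2 * \<bar>p-x2\<bar>"
  by (simp add: D_def eval_nat_numeral atMost_Suc)

lemma D_reflect: "D x0 x1 x2 p = D (1-x2) (1-x1) (1-x0) (1-p)"
  unfolding D_expand by (simp add: abs_minus_commute algebra_simps)

lemma continuous_on_D: "continuous_on S (D x0 x1 x2)"
  unfolding D_def by (intro continuous_intros)

lemma D_nonneg: "0 \<le> p \<Longrightarrow> p \<le> 1 \<Longrightarrow> 0 \<le> D x0 x1 x2 p"
  unfolding D_expand by (intro add_nonneg_nonneg mult_nonneg_nonneg) auto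

lemma bdd_above_D_image: "bdd_above (D x0 x1 x2 ` {0..1})"
  by (intro bounded_imp_bdd_above compact_imp_bounded compact_continuous_image
        continuous_on_D compact_Icc)

lemma D_le_SUP: "p \<in> {0..1} \<Longrightarrow> D x0 x1 x2 p \<le> (SUP t\<in>{0..1}. D x0 x1 x2 t)"
  by (rule cSUP_upper[OF _ bdd_above_D_image])

lemma supnorm01_D: "supnorm01 (D x0 x1 x2) = (SUP p\<in>{0..1}. D x0 x1 x2 p)"
  unfolding supnorm01_def by (intro SUP_cong refl) (auto simp: D_nonneg)

lemma quadratic_denom_pos: "0 < 1 - p + (p::real)^2"
proof -
  have "1 - p + p^2 = (p - 1/2)^2 + 3/4" by (simp add: power2_eq_square algebra_simps)
  then show ?thesis by (metis add_nonneg_pos zero_le_power2 zero_less_divide_iff zero_less_numeral)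
qed

text \<open>For \<open>p \<in> [0,1/2]\<close>, \<open>D M (1/2) (1-M) p \<le> M\<close> exactly when \<open>M \<ge> critical_level p\<close>.\<close>

definition critical_level :: "real \<Rightarrow> real" where
  "critical_level p = p * (1-p)^2 / (1 - p + p^2)"

lemma critical_level_le_iff:
  "critical_level p \<le> M \<longleftrightarrow> p * (1-p)^2 \<le> M * (1 - p + p^2)"
  unfolding critical_level_def using quadratic_denom_pos[of p] by (simp add: divide_le_eq)

lemma critical_level_le_half:
  assumes "p \<in> {0..1/2}"
  shows "critical_level p \<le> 1/2"
proof -
  have "p * (1-p)^2 \<le> p * (1-p)"
    using assms by (auto intro!: mult_left_mono simp: power2_eq_square)
  also have "\<dots> \<le> 1/4"
    using zero_le_power2[of "p - 1/2"] by (simp add: power2_eq_square algebra_simps)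
  also have "\<dots> \<le> 1/2 * (1 - p + p^2)"
    using zero_le_power2[of "p - 1/2"] by (simp add: power2_eq_square algebra_simps)
  finally show ?thesis by (subst critical_level_le_iff)
qed

lemma critical_level_attains_max:
  obtains q where "q \<in> {0..1/2}" "\<And>p. p \<in> {0..1/2} \<Longrightarrow> critical_level p \<le> critical_level q"
proof -
  have "continuous_on {0..1/2} critical_level"
    unfolding critical_level_def
    by (intro continuous_intros) (metis less_irrefl quadratic_denom_pos)
  then show ?thesis
    using continuous_attains_sup[of "{0..1/2}" critical_level] that by auto
qed

lemma D_competitor_le_left:
  assumes "0 \<le> p" "p \<le> 1/2" "0 \<le> M" "M \<le> 1/2" "critical_level p \<le> M"
  shows "D M (1/2) (1-M) p \<le> M"
proof (cases "p \<le> M")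
  case True
  then have "D M (1/2) (1-M) p = M - 2*M*p"
    unfolding D_expand using assms by (simp add: abs_if power2_eq_square algebra_simps)
  then show ?thesis using assms by simp
next
  case False
  then have "D M (1/2) (1-M) p = M + 2 * (p * (1-p)^2 - M * (1 - p + p^2))"
    unfolding D_expand using assms by (simp add: abs_if power2_eq_square algebra_simps)
  then show ?thesis using assms by (simp add: critical_level_le_iff)
qed

lemma SUP_D_competitor_le:
  assumes "0 \<le> M" "M \<le> 1/2" "\<And>p. p \<in> {0..1/2} \<Longrightarrow> critical_level p \<le> M"
  shows "(SUP p\<in>{0..1}. D M (1/2) (1-M) p) \<le> M"
proof (rule cSUP_least)
  fix p :: real assume p: "p \<in> {0..1}"
  show "D M (1/2) (1-M) p \<le> M"
  proof (cases "p \<le> 1/2")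
    case True
    then show ?thesis using p assms by (intro D_competitor_le_left) auto
  next
    case False
    have "D M (1/2) (1-M) p = D M (1/2) (1-M) (1-p)"
      using D_reflect[of M "1/2" "1-M" p] by simp
    also have "\<dots> \<le> M" using p False assms by (intro D_competitor_le_left) auto
    finally show ?thesis .
  qed
qed simp

text \<open>Each bracket below is a triangle inequality \<open>\<bar>s - x\<bar> + \<bar>t - x\<bar> \<ge> \<bar>s - t\<bar>\<close>.\<close>

lemma D_weighted_sum_ge:
  assumes "0 \<le> q" "q \<le> 1/2"
  shows "4*q*(1-q)^2 \<le> ((1-q)^2 + q^2) * D x0 x1 x2 0 + D x0 x1 x2 q + D x0 x1 x2 (1-q)
                        + ((1-q)^2 + q^2) * D x0 x1 x2 1"
proof -
  have "(1-q)^2 * q \<le> (1-q)^2 * (\<bar>x0\<bar> + \<bar>q-x0\<bar>)"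
    and "q^2 * (1-q) \<le> q^2 * (\<bar>x0\<bar> + \<bar>1-q-x0\<bar>)"
    and "2*q*(1-q) * (1-2*q) \<le> 2*q*(1-q) * (\<bar>q-x1\<bar> + \<bar>1-q-x1\<bar>)"
    and "(1-q)^2 * q \<le> (1-q)^2 * (\<bar>1-x2\<bar> + \<bar>1-q-x2\<bar>)"
    and "q^2 * (1-q) \<le> q^2 * (\<bar>1-x2\<bar> + \<bar>q-x2\<bar>)"
    using assms by (intro mult_left_mono; auto)+
  then show ?thesis
    unfolding D_expand by (simp add: algebra_simps power2_eq_square abs_minus_commute)
qed

lemma weighted_sum_forces_eq:
  fixes w M a b c d :: real
  assumes "0 < w" "a \<le> M" "b \<le> M" "c \<le> M" "d \<le> M"
    and "(2*w + 2) * M \<le> w*a + b + c + w*d"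
  shows "a = M" "d = M"
proof -
  have "w*a \<le> w*M" "w*d \<le> w*M" using assms by simp_all
  moreover have "2*w*M + 2*M \<le> w*a + b + c + w*d" using assms(6) by (simp add: algebra_simps)
  ultimately have "w*a = w*M" "w*d = w*M" using assms(3,4) by linarith+
  then show "a = M" "d = M" using \<open>0 < w\<close> by simp_all
qed

theorem lemma5p4:
  fixes a0 a1 a2 :: real
  assumes "a0 \<in> {0..1}" "a1 \<in> {0..1}" "a2 \<in> {0..1}"
    and "\<And>x0 x1 x2. x0 \<in> {0..1} \<Longrightarrow> x1 \<in> {0..1} \<Longrightarrow> x2 \<in> {0..1} \<Longrightarrow>
           (SUP p\<in>{0..1}. D a0 a1 a2 p) \<le> (SUP p\<in>{0..1}. D x0 x1 x2 p)"
  shows "D a0 a1 a2 0 = supnorm01 (D a0 a1 a2) \<and> D a0 a1 a2 1 = supnorm01 (D a0 a1 a2)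
         \<and> {0, 1} \<subseteq> maxset01 (D a0 a1 a2)"
proof -
  obtain q where q: "q \<in> {0..1/2}"
    and q_max: "\<And>p. p \<in> {0..1/2} \<Longrightarrow> critical_level p \<le> critical_level q"
    using critical_level_attains_max by blast
  define M where "M = critical_level q"
  have M_bounds: "0 \<le> M" "M \<le> 1/2"
    using q_max[of 0] critical_level_le_half[OF q] by (simp_all add: M_def critical_level_def)
  have sup_le: "(SUP p\<in>{0..1}. D a0 a1 a2 p) \<le> M"
    using assms(4)[of M "1/2" "1-M"] SUP_D_competitor_le[of M] M_bounds q_max
    by (fastforce simp: M_def)
  then have f_le: "D a0 a1 a2 p \<le> M" if "p \<in> {0..1}" for p
    using D_le_SUP[OF that, of a0 a1 a2] by linarith
  have "(2 * ((1-q)^2 + q^2) + 2) * M = 4*q*(1-q)^2"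
    using quadratic_denom_pos[of q]
    by (simp add: M_def critical_level_def field_simps power2_eq_square)
  moreover have "0 < (1-q)^2 + q^2" using q by (simp add: add_pos_nonneg)
  ultimately have "D a0 a1 a2 0 = M" "D a0 a1 a2 1 = M"
    using weighted_sum_forces_eq[of "(1-q)^2 + q^2" "D a0 a1 a2 0" M "D a0 a1 a2 q"
        "D a0 a1 a2 (1-q)" "D a0 a1 a2 1"] D_weighted_sum_ge[of q a0 a1 a2] f_le q
    by auto
  moreover have "supnorm01 (D a0 a1 a2) = M"
    using sup_le D_le_SUP[of 0 a0 a1 a2] \<open>D a0 a1 a2 0 = M\<close> by (simp add: supnorm01_D)
  ultimately show ?thesis by (auto simp: maxset01_def)
qed

end
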